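(* Let $G$ be a compact Hausdorff topological group and $X$ a $G$-connected Hausdorff $G$-space. If $H=G_z$ is the isotropy group of some point $z\in X$, then $\mathrm{cat}_H(X)\le\mathbf{TC}_G(X)$.
   Context: $G_z=\{g\in G: gz=z\}$. $X$ is $G$-connected if $X^K=\{x: kx=x\ \forall k\in K\}$ is path-connected for every closed subgroup $K$. For a compact group $\Gamma$ acting on $Y$: a $\Gamma$-homotopy is an equivariant homotopy with trivial action on $I$; an invariant set is $\Gamma$-categorical if its inclusion is $\Gamma$-homotopic to a map into a single $\Gamma$-orbit; $\mathrm{cat}_\Gamma(Y)$ is the least number of open $\Gamma$-categorical sets covering $Y$. $\mathbf{TC}_G(X)$ is the least $k$ such that $X\times X$ (diagonal action) is covered by $k$ $G$-invariant open sets $U_i$ each admitting a $G$-map $s\colon U_i\to X^I$ with $\pi s$ $G$-homotopic to the inclusion ($\infty$ if none); $X^I$ is the path space (compact-open topology, action $(g\gamma)(t)=g\gamma(t)$), $\pi(\gamma)=(\gamma(0),\gamma(1))$. *)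

theory Defs
  imports "HOL-Analysis.Analysis" "HOL-Algebra.Group"
begin

definition topological_group :: "('g, 'm) monoid_scheme \<Rightarrow> 'g topology \<Rightarrow> bool" where
  "topological_group G TG \<longleftrightarrow>
     group G \<and> topspace TG = carrier G \<and>
     continuous_map (prod_topology TG TG) TG (\<lambda>(g, h). g \<otimes>\<^bsub>G\<^esub> h) \<and>
     continuous_map TG TG (\<lambda>g. inv\<^bsub>G\<^esub> g)"

definition G_space :: "('g, 'm) monoid_scheme \<Rightarrow> 'g topology \<Rightarrow> 'x topology
                        \<Rightarrow> ('g \<Rightarrow> 'x \<Rightarrow> 'x) \<Rightarrow> bool" where
  "G_space G TG X act \<longleftrightarrow>
     continuous_map (prod_topology TG X) X (\<lambda>(g, x). act g x) \<and>
     (\<forall>x\<in>topspace X. act \<one>\<^bsub>G\<^esub> x = x) \<and>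
     (\<forall>g\<in>carrier G. \<forall>h\<in>carrier G. \<forall>x\<in>topspace X.
        act (g \<otimes>\<^bsub>G\<^esub> h) x = act g (act h x))"

definition isotropy :: "('g, 'm) monoid_scheme \<Rightarrow> ('g \<Rightarrow> 'x \<Rightarrow> 'x) \<Rightarrow> 'x \<Rightarrow> 'g set" where
  "isotropy G act z = {g \<in> carrier G. act g z = z}"

definition fixed_set :: "'x topology \<Rightarrow> ('g \<Rightarrow> 'x \<Rightarrow> 'x) \<Rightarrow> 'g set \<Rightarrow> 'x set" where
  "fixed_set X act K = {x \<in> topspace X. \<forall>k\<in>K. act k x = x}"

definition G_connected :: "('g, 'm) monoid_scheme \<Rightarrow> 'g topology \<Rightarrow> 'x topology
                            \<Rightarrow> ('g \<Rightarrow> 'x \<Rightarrow> 'x) \<Rightarrow> bool" where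
  "G_connected G TG X act \<longleftrightarrow>
     (\<forall>K. subgroup K G \<and> closedin TG K \<longrightarrow> path_connectedin X (fixed_set X act K))"

definition invariant_set :: "'g set \<Rightarrow> ('g \<Rightarrow> 'y \<Rightarrow> 'y) \<Rightarrow> 'y set \<Rightarrow> bool" where
  "invariant_set \<Gamma> act U \<longleftrightarrow> (\<forall>\<gamma>\<in>\<Gamma>. \<forall>u\<in>U. act \<gamma> u \<in> U)"

definition equivariant_on :: "'g set \<Rightarrow> ('g \<Rightarrow> 'a \<Rightarrow> 'a) \<Rightarrow> ('g \<Rightarrow> 'b \<Rightarrow> 'b)
                               \<Rightarrow> 'a set \<Rightarrow> ('a \<Rightarrow> 'b) \<Rightarrow> bool" where
  "equivariant_on \<Gamma> act1 act2 U f \<longleftrightarrow> (\<forall>\<gamma>\<in>\<Gamma>. \<forall>u\<in>U. f (act1 \<gamma> u) = act2 \<gamma> (f u))"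

text \<open>\<Gamma>-homotopy between maps defined on an invariant subset U of a \<Gamma>-space:
a homotopy all of whose stages are equivariant (trivial action on I).\<close>
definition G_homotopic :: "'g set \<Rightarrow> ('g \<Rightarrow> 'a \<Rightarrow> 'a) \<Rightarrow> ('g \<Rightarrow> 'b \<Rightarrow> 'b)
                            \<Rightarrow> 'a topology \<Rightarrow> 'b topology \<Rightarrow> ('a \<Rightarrow> 'b) \<Rightarrow> ('a \<Rightarrow> 'b) \<Rightarrow> bool" where
  "G_homotopic \<Gamma> act1 act2 A B f g \<longleftrightarrow>
     homotopic_with (equivariant_on \<Gamma> act1 act2 (topspace A)) A B f g"

definition orbit :: "'g set \<Rightarrow> ('g \<Rightarrow> 'y \<Rightarrow> 'y) \<Rightarrow> 'y \<Rightarrow> 'y set" where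
  "orbit \<Gamma> act y = {act \<gamma> y | \<gamma>. \<gamma> \<in> \<Gamma>}"

definition G_categorical :: "'g set \<Rightarrow> 'y topology \<Rightarrow> ('g \<Rightarrow> 'y \<Rightarrow> 'y) \<Rightarrow> 'y set \<Rightarrow> bool" where
  "G_categorical \<Gamma> Y act U \<longleftrightarrow>
     invariant_set \<Gamma> act U \<and> U \<subseteq> topspace Y \<and>
     (\<exists>f y0. y0 \<in> topspace Y \<and> f ` U \<subseteq> orbit \<Gamma> act y0 \<and>
            G_homotopic \<Gamma> act act (subtopology Y U) Y id f)"

definition G_cat :: "'g set \<Rightarrow> 'y topology \<Rightarrow> ('g \<Rightarrow> 'y \<Rightarrow> 'y) \<Rightarrow> enat" where
  "G_cat \<Gamma> Y act = Inf {enat k | k. \<exists>U :: nat \<Rightarrow> 'y set.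
      (\<forall>i<k. openin Y (U i) \<and> G_categorical \<Gamma> Y act (U i)) \<and>
      topspace Y \<subseteq> (\<Union>i<k. U i)}"

text \<open>Paths in X, as functions on [0,1] (extended by undefined elsewhere).\<close>
definition paths :: "'x topology \<Rightarrow> (real \<Rightarrow> 'x) set" where
  "paths X = {\<gamma>. pathin X \<gamma> \<and> \<gamma> \<in> extensional {0..1}}"

definition path_space :: "'x topology \<Rightarrow> (real \<Rightarrow> 'x) topology" where
  "path_space X = subtopology
     (topology_generated_by
        {{\<gamma> \<in> paths X. \<gamma> ` K \<subseteq> V} | K V.
            compactin (top_of_set {0..1::real}) K \<and> openin X V})
     (paths X)"

definition path_act :: "('g \<Rightarrow> 'x \<Rightarrow> 'x) \<Rightarrow> 'g \<Rightarrow> (real \<Rightarrow> 'x) \<Rightarrow> (real \<Rightarrow> 'x)" where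
  "path_act act g \<gamma> = restrict (\<lambda>t. act g (\<gamma> t)) {0..1}"

definition diag_act :: "('g \<Rightarrow> 'x \<Rightarrow> 'x) \<Rightarrow> 'g \<Rightarrow> 'x \<times> 'x \<Rightarrow> 'x \<times> 'x" where
  "diag_act act g p = (act g (fst p), act g (snd p))"

definition endpoints :: "(real \<Rightarrow> 'x) \<Rightarrow> 'x \<times> 'x" where
  "endpoints \<gamma> = (\<gamma> 0, \<gamma> 1)"

definition TC_domain :: "'g set \<Rightarrow> 'x topology \<Rightarrow> ('g \<Rightarrow> 'x \<Rightarrow> 'x) \<Rightarrow> ('x \<times> 'x) set \<Rightarrow> bool" where
  "TC_domain \<Gamma> X act U \<longleftrightarrow>
     openin (prod_topology X X) U \<and> invariant_set \<Gamma> (diag_act act) U \<and>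
     (\<exists>s. continuous_map (subtopology (prod_topology X X) U) (path_space X) s \<and>
          equivariant_on \<Gamma> (diag_act act) (path_act act) U s \<and>
          G_homotopic \<Gamma> (diag_act act) (diag_act act)
             (subtopology (prod_topology X X) U) (prod_topology X X) (endpoints \<circ> s) id)"

definition TC_G :: "'g set \<Rightarrow> 'x topology \<Rightarrow> ('g \<Rightarrow> 'x \<Rightarrow> 'x) \<Rightarrow> enat" where
  "TC_G \<Gamma> X act = Inf {enat k | k. \<exists>U :: nat \<Rightarrow> ('x \<times> 'x) set.
      (\<forall>i<k. TC_domain \<Gamma> X act (U i)) \<and>
      topspace (prod_topology X X) \<subseteq> (\<Union>i<k. U i)}"

end

theory Submission
  imports Defs
begin

text \<open>Slice a TC-cover of X \<times> X at z: for a domain U with equivariant section s, the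
  slice {x. (z, x) \<in> U} is open, and since H = G_z fixes z, x \<mapsto> s (z, x) is an
  H-equivariant family of paths. Together with the restriction of the G-homotopy from
  endpoints \<circ> s to the inclusion, it deforms the slice H-equivariantly onto the point z,
  whose H-orbit is {z}. So every TC-cover by k sets yields an H-categorical cover of X by
  k sets.\<close>

lemma openin_path_space_subbasic:
  assumes "compactin (top_of_set {0..1::real}) K" and "openin X V"
  shows "openin (path_space X) {\<gamma> \<in> paths X. \<gamma> ` K \<subseteq> V}"
proof -
  have "openin (topology_generated_by
          {{\<gamma> \<in> paths X. \<gamma> ` K \<subseteq> V} | K V.
             compactin (top_of_set {0..1::real}) K \<and> openin X V})
          {\<gamma> \<in> paths X. \<gamma> ` K \<subseteq> V}"
    using assms by (intro topology_generated_by_Basis) blast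
  then show ?thesis
    unfolding path_space_def openin_subtopology by blast
qed

lemma path_space_imp_pathin:
  assumes "\<gamma> \<in> topspace (path_space X)"
  shows "pathin X \<gamma>"
  using assms by (simp add: path_space_def paths_def)

lemma continuous_map_path_space_eval:
  assumes s: "continuous_map Y (path_space X) s"
  shows "continuous_map (prod_topology (top_of_set {0..1}) Y) X (\<lambda>(t, y). s y t)"
  unfolding continuous_map_eq_topcontinuous_at topcontinuous_at_def
proof (intro conjI ballI allI impI)
  have path: "\<And>y. y \<in> topspace Y \<Longrightarrow> pathin X (s y)"
    using continuous_map_image_subset_topspace[OF s] path_space_imp_pathin by blast
  then show "(\<lambda>(t, y). s y t) \<in> topspace (prod_topology (top_of_set {0..1}) Y) \<rightarrow> topspace X"
    by (fastforce simp: pathin_def continuous_map_def)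
  fix p V
  assume p: "p \<in> topspace (prod_topology (top_of_set {0..1::real}) Y)"
    and V: "openin X V \<and> (case p of (t, y) \<Rightarrow> s y t) \<in> V"
  obtain t0 y0 where p_eq: "p = (t0, y0)" and t0: "t0 \<in> {0..1}" and y0: "y0 \<in> topspace Y"
    using p by auto
  have "openin (top_of_set {0..1::real}) {t \<in> {0..1}. s y0 t \<in> V}"
    using openin_continuous_map_preimage[OF path[OF y0, unfolded pathin_def], of V] V by simp
  then obtain d where "d > 0" and d: "\<And>t. t \<in> {0..1} \<Longrightarrow> dist t t0 < d \<Longrightarrow> s y0 t \<in> V"
    using V p_eq t0 unfolding openin_euclidean_subtopology_iff by force
  \<comment> \<open>A compact neighbourhood K of t0 on which s y0 stays in V; the paths with
      the same property form a subbasic open set of the path space.\<close>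
  define K where "K = cball t0 (d/2) \<inter> {0..1}"
  define B where "B = {\<gamma> \<in> paths X. \<gamma> ` K \<subseteq> V}"
  have "compactin (top_of_set {0..1::real}) K"
    unfolding K_def compactin_subtopology by auto
  then have "openin Y {y \<in> topspace Y. s y \<in> B}"
    unfolding B_def using V
    by (intro openin_continuous_map_preimage[OF s] openin_path_space_subbasic) simp_all
  moreover have "openin (top_of_set {0..1::real}) (ball t0 (d/2) \<inter> {0..1})"
    by (metis openin_open_Int open_ball inf_commute)
  moreover have "s y0 \<in> B"
    using continuous_map_image_subset_topspace[OF s] y0 \<open>d > 0\<close> d
    by (fastforce simp: B_def K_def path_space_def dist_commute)
  ultimately show "\<exists>W. openin (prod_topology (top_of_set {0..1}) Y) W \<and> p \<in> W \<and>
                     (\<forall>q\<in>W. (case q of (t, y) \<Rightarrow> s y t) \<in> V)"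
    using p_eq t0 y0 \<open>d > 0\<close>
    by (intro exI[of _ "(ball t0 (d/2) \<inter> {0..1}) \<times> {y \<in> topspace Y. s y \<in> B}"])
       (auto simp: openin_prod_Times_iff B_def K_def)
qed

lemma homotopic_with_path_space_endpoints:
  assumes "continuous_map Y (path_space X) s" and "\<And>t. t \<in> {0..1} \<Longrightarrow> P (\<lambda>y. s y t)"
  shows "homotopic_with P Y X (\<lambda>y. s y 0) (\<lambda>y. s y 1)"
  unfolding homotopic_with_def
  using continuous_map_path_space_eval[OF assms(1)] assms(2)
  by (intro exI[of _ "\<lambda>(t, y). s y t"]) auto

lemma equivariant_on_path_eval:
  assumes "equivariant_on \<Gamma> act1 (path_act act) U s" and "t \<in> {0..1}"
  shows "equivariant_on \<Gamma> act1 act U (\<lambda>u. s u t)"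
  using assms by (simp add: equivariant_on_def path_act_def)

lemma homotopic_with_diag_act_components:
  assumes "homotopic_with (equivariant_on H act (diag_act act) V) A (prod_topology X X) f g"
  shows "homotopic_with (equivariant_on H act act V) A X (fst \<circ> f) (fst \<circ> g)"
    and "homotopic_with (equivariant_on H act act V) A X (snd \<circ> f) (snd \<circ> g)"
  by (intro homotopic_with_compose_continuous_map_left[OF assms continuous_map_fst]
        homotopic_with_compose_continuous_map_left[OF assms continuous_map_snd];
      auto simp: equivariant_on_def diag_act_def)+

definition slice :: "'x topology \<Rightarrow> ('x \<times> 'x) set \<Rightarrow> 'x \<Rightarrow> 'x set" where
  "slice X U z = {x \<in> topspace X. (z, x) \<in> U}"

lemma topspace_subtopology_slice [simp]: "topspace (subtopology X (slice X U z)) = slice X U z"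
  by (auto simp: slice_def)

lemma continuous_map_Pair_slice:
  assumes "z \<in> topspace X"
  shows "continuous_map (subtopology X (slice X U z)) (subtopology (prod_topology X X) U) (Pair z)"
proof -
  have "continuous_map X (prod_topology X X) (Pair z)"
    using assms by (simp add: continuous_map_pairwise o_def)
  then show ?thesis
    by (auto simp: continuous_map_in_subtopology slice_def continuous_map_from_subtopology)
qed

lemma openin_slice:
  assumes "openin (prod_topology X X) U" and "z \<in> topspace X"
  shows "openin X (slice X U z)"
proof -
  have "continuous_map X (prod_topology X X) (Pair z)"
    using assms(2) by (simp add: continuous_map_pairwise o_def)
  from openin_continuous_map_preimage[OF this assms(1)] show ?thesis
    by (simp add: slice_def)
qed

lemma invariant_set_slice:
  assumes "invariant_set \<Gamma> (diag_act act) U" and "U \<subseteq> topspace (prod_topology X X)"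
    and "H \<subseteq> \<Gamma>" and "\<forall>h\<in>H. act h z = z"
  shows "invariant_set H act (slice X U z)"
  unfolding invariant_set_def slice_def
proof (intro ballI, clarify)
  fix h x assume "h \<in> H" and "(z, x) \<in> U"
  then have "(z, act h x) \<in> U"
    using assms(1,3,4) by (force simp: invariant_set_def diag_act_def)
  with assms(2) show "act h x \<in> topspace X \<and> (z, act h x) \<in> U"
    by auto
qed

lemma G_homotopic_restrict_slice:
  assumes "G_homotopic \<Gamma> (diag_act act) (diag_act act)
             (subtopology (prod_topology X X) U) (prod_topology X X) f g"
    and "U \<subseteq> topspace (prod_topology X X)" and "z \<in> topspace X"
    and "H \<subseteq> \<Gamma>" and "\<forall>h\<in>H. act h z = z"
  shows "homotopic_with (equivariant_on H act (diag_act act) (slice X U z))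
           (subtopology X (slice X U z)) (prod_topology X X) (f \<circ> Pair z) (g \<circ> Pair z)"
  using assms(1) unfolding G_homotopic_def
proof (rule homotopic_with_compose_continuous_map_right[OF _ continuous_map_Pair_slice[OF assms(3)]])
  fix k
  assume k: "equivariant_on \<Gamma> (diag_act act) (diag_act act) (topspace (subtopology (prod_topology X X) U)) k"
  show "equivariant_on H act (diag_act act) (slice X U z) (k \<circ> Pair z)"
    unfolding equivariant_on_def
  proof (intro ballI)
    fix h x assume "h \<in> H" and "x \<in> slice X U z"
    then have "k (diag_act act h (z, x)) = diag_act act h (k (z, x))"
      using k assms(2,4) by (auto simp: equivariant_on_def slice_def)
    with \<open>h \<in> H\<close> assms(5) show "(k \<circ> Pair z) (act h x) = diag_act act h ((k \<circ> Pair z) x)"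
      by (simp add: diag_act_def)
  qed
qed

lemma G_categorical_slice:
  assumes U: "TC_domain \<Gamma> X act U" and z: "z \<in> topspace X"
    and H: "H \<subseteq> \<Gamma>" "H \<noteq> {}" "\<forall>h\<in>H. act h z = z"
  shows "G_categorical H X act (slice X U z)"
proof -
  let ?V = "slice X U z" and ?XX = "prod_topology X X"
  let ?P = "equivariant_on H act act ?V"
  from U obtain s where "openin ?XX U" and inv: "invariant_set \<Gamma> (diag_act act) U"
    and s_cont: "continuous_map (subtopology ?XX U) (path_space X) s"
    and s_equi: "equivariant_on \<Gamma> (diag_act act) (path_act act) U s"
    and s_hom: "G_homotopic \<Gamma> (diag_act act) (diag_act act) (subtopology ?XX U) ?XX (endpoints \<circ> s) id"
    unfolding TC_domain_def by blast
  have U_sub: "U \<subseteq> topspace ?XX"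
    using \<open>openin ?XX U\<close> by (rule openin_subset)
  note restricted = homotopic_with_diag_act_components[OF
      G_homotopic_restrict_slice[OF s_hom U_sub z H(1,3)]]
  have start: "homotopic_with ?P (subtopology X ?V) X (\<lambda>x. s (z, x) 0) (\<lambda>x. z)"
    using restricted(1) by (simp add: o_def endpoints_def)
  have finish: "homotopic_with ?P (subtopology X ?V) X (\<lambda>x. s (z, x) 1) id"
    using restricted(2) by (simp add: o_def endpoints_def id_def)
  \<comment> \<open>Since H fixes z, the path s (z, x) from z to x moves H-equivariantly with x.\<close>
  have "homotopic_with ?P (subtopology X ?V) X (\<lambda>x. (s \<circ> Pair z) x 0) (\<lambda>x. (s \<circ> Pair z) x 1)"
  proof (rule homotopic_with_path_space_endpoints)
    show "continuous_map (subtopology X ?V) (path_space X) (s \<circ> Pair z)"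
      using continuous_map_compose[OF continuous_map_Pair_slice[OF z] s_cont] .
    fix t :: real assume "t \<in> {0..1}"
    then have "equivariant_on \<Gamma> (diag_act act) act U (\<lambda>u. s u t)"
      by (rule equivariant_on_path_eval[OF s_equi])
    then show "?P (\<lambda>x. (s \<circ> Pair z) x t)"
      using H U_sub by (fastforce simp: equivariant_on_def diag_act_def slice_def)
  qed
  then have along: "homotopic_with ?P (subtopology X ?V) X (\<lambda>x. s (z, x) 0) (\<lambda>x. s (z, x) 1)"
    by (simp add: o_def)
  have "homotopic_with ?P (subtopology X ?V) X id (\<lambda>x. z)"
    using homotopic_with_symD[OF finish] homotopic_with_symD[OF along] start
    by (blast intro: homotopic_with_trans)
  moreover have "(\<lambda>x. z) ` ?V \<subseteq> orbit H act z"
    using H by (auto simp: orbit_def)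
  ultimately show ?thesis
    using invariant_set_slice[OF inv U_sub H(1,3)] z
    unfolding G_categorical_def G_homotopic_def topspace_subtopology_slice
    by (auto simp: slice_def)
qed

lemma G_cat_le_TC_G_of_fixing_subset:
  assumes z: "z \<in> topspace X" and H: "H \<subseteq> \<Gamma>" "H \<noteq> {}" "\<forall>h\<in>H. act h z = z"
  shows "G_cat H X act \<le> TC_G \<Gamma> X act"
  unfolding G_cat_def TC_G_def
proof (rule Inf_superset_mono, clarify)
  fix k and U :: "nat \<Rightarrow> ('a \<times> 'a) set"
  assume dom: "\<forall>i<k. TC_domain \<Gamma> X act (U i)"
    and cover: "topspace (prod_topology X X) \<subseteq> (\<Union>i<k. U i)"
  have "\<forall>i<k. openin X (slice X (U i) z) \<and> G_categorical H X act (slice X (U i) z)"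
  proof (intro allI impI conjI)
    fix i assume "i < k"
    then have Ui: "TC_domain \<Gamma> X act (U i)"
      using dom by blast
    then show "openin X (slice X (U i) z)"
      unfolding TC_domain_def using openin_slice z by metis
    show "G_categorical H X act (slice X (U i) z)"
      using G_categorical_slice[OF Ui z H] .
  qed
  moreover have "topspace X \<subseteq> (\<Union>i<k. slice X (U i) z)"
    using cover z by (auto simp: slice_def)
  ultimately show "\<exists>k'. enat k = enat k' \<and> (\<exists>V. (\<forall>i<k'. openin X (V i) \<and>
                     G_categorical H X act (V i)) \<and> topspace X \<subseteq> (\<Union>i<k'. V i))"
    by (intro exI[of _ k] conjI refl exI[of _ "\<lambda>i. slice X (U i) z"])
qed

theorem proposition5p7:
  fixes G :: "('g, 'm) monoid_scheme" and TG :: "'g topology"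
    and X :: "'x topology" and act :: "'g \<Rightarrow> 'x \<Rightarrow> 'x" and z :: 'x
  assumes "topological_group G TG" and "compact_space TG" and "Hausdorff_space TG"
    and "G_space G TG X act" and "Hausdorff_space X" and "G_connected G TG X act"
    and "z \<in> topspace X"
  shows "G_cat (isotropy G act z) X act \<le> TC_G (carrier G) X act"
proof (rule G_cat_le_TC_G_of_fixing_subset[OF \<open>z \<in> topspace X\<close>])
  have "\<one>\<^bsub>G\<^esub> \<in> carrier G"
    using assms(1) by (simp add: topological_group_def group.is_monoid monoid.one_closed)
  moreover have "act \<one>\<^bsub>G\<^esub> z = z"
    using assms(4,7) by (simp add: G_space_def)
  ultimately show "isotropy G act z \<noteq> {}"
    unfolding isotropy_def by blast
qed (simp_all add: isotropy_def)

end
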